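(* In the reinforcement-learning network model described in the context, for every $\varepsilon>0$ there is a constant $C>0$ depending only on $(a_{kl})_{k,l\in\mathbb{V}}$ and $\varepsilon$ such that, for all $i,j\in\mathbb{V}$ with $i\sim j$ and all $n$ with $T_n\ge C$: if $x_n\in U_{ij}(\varepsilon)$ and $|H(x_{n+1})-H(x_n)|<\varepsilon/2$, then $x_{n+1}\in U_{ij}(2\varepsilon)$.
   Context: Let $G=(\mathbb{V},E)$ be a finite graph with adjacency $\sim$. Let $a_{ij}=a_{ji}\ge0$, $>0$ only if $i\sim j$. Let $(p_W)_{W\subseteq\mathbb{V}}$ be nonnegative with $\sum_Wp_W=1$; for $i\sim j$, $p_{ij}=\sum_{W:i,j\in W}p_W$; $p_{ij}=0$ if $i\not\sim j$. Assume some $a_{ij}p_{ij}>0$. Let $v^0_{ij}=v^0_{ji}\ge0$, $>0$ iff $i\sim j$. Process: $V^0_{ij}=v^0_{ij}$, $V^n_{ij}=0$ if $i\not\sim j$, $V^n_i=\sum_jV^n_{ij}$; at each time $n$ each vertex $i$ independently chooses a neighbour $j$ with probability $V^n_{ij}/V^n_i$; independently Nature picks $W_n$ with $\mathbb{P}(W_n=W)=p_W$, i.i.d.; if $i,j\in W_n$, $i\sim j$ and $i,j$ choose each other, then $V^{n+1}_{ij}=V^{n+1}_{ji}=V^n_{ij}+a_{ij}$, else unchanged. Let $T_n=\sum_{i,j}V^n_{ij}$ (ordered pairs), $x^n_{ij}=V^n_{ij}/T_n$, $x_n=(x^n_{ij})$. Let $h_1=\sum_{(i,j):a_{ij}p_{ij}>0}v^0_{ij}/\sum_{k,l}v^0_{kl}$;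 $\Delta$ is the set of arrays $x$ with $x_{ij}=x_{ji}\ge0$, $x_{ij}=0$ if $i\not\sim j$, $\sum_{i,j}x_{ij}=1$, $\sum_{(i,j):a_{ij}p_{ij}>0}x_{ij}\ge h_1$; $x_i=\sum_jx_{ij}$. $H(x)=\sum_{(i,j):x_{ij}>0}a_{ij}p_{ij}x_{ij}^2/(x_ix_j)$; for $x_{ij}>0$, $y_{ij}=a_{ij}p_{ij}x_{ij}/(x_ix_j)$. For $\varepsilon>0$, $U_{ij}(\varepsilon)=\{x\in\Delta:\ x_{ij}<\varepsilon\ \text{or}\ y_{ij}-H(x)\ge-\varepsilon\}$. *)

theory Defs
  imports Complex_Main
begin

text \<open>Vertex set = a finite type 'v. adj is the adjacency relation of the graph,
a the reinforcement weights, p the distribution of the random subset W.\<close>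

definition pp :: "('v \<Rightarrow> 'v \<Rightarrow> bool) \<Rightarrow> ('v set \<Rightarrow> real) \<Rightarrow> 'v \<Rightarrow> 'v \<Rightarrow> real" where
  "pp adj p i j = (if adj i j then (\<Sum>W \<in> {W. i \<in> W \<and> j \<in> W}. p W) else 0)"

definition Tot :: "('v::finite \<Rightarrow> 'v \<Rightarrow> real) \<Rightarrow> real" where
  "Tot V = (\<Sum>i\<in>UNIV. \<Sum>j\<in>UNIV. V i j)"

definition xnorm :: "('v::finite \<Rightarrow> 'v \<Rightarrow> real) \<Rightarrow> 'v \<Rightarrow> 'v \<Rightarrow> real" where
  "xnorm V i j = V i j / Tot V"

definition xrow :: "('v::finite \<Rightarrow> 'v \<Rightarrow> real) \<Rightarrow> 'v \<Rightarrow> real" where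
  "xrow x i = (\<Sum>j\<in>UNIV. x i j)"

definition Hfun :: "('v::finite \<Rightarrow> 'v \<Rightarrow> bool) \<Rightarrow> ('v \<Rightarrow> 'v \<Rightarrow> real) \<Rightarrow> ('v set \<Rightarrow> real)
    \<Rightarrow> ('v \<Rightarrow> 'v \<Rightarrow> real) \<Rightarrow> real" where
  "Hfun adj a p x = (\<Sum>(i,j) \<in> {(i,j). x i j > 0}.
      a i j * pp adj p i j * (x i j)^2 / (xrow x i * xrow x j))"

definition yfun :: "('v::finite \<Rightarrow> 'v \<Rightarrow> bool) \<Rightarrow> ('v \<Rightarrow> 'v \<Rightarrow> real) \<Rightarrow> ('v set \<Rightarrow> real)
    \<Rightarrow> ('v \<Rightarrow> 'v \<Rightarrow> real) \<Rightarrow> 'v \<Rightarrow> 'v \<Rightarrow> real" where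
  "yfun adj a p x i j = a i j * pp adj p i j * x i j / (xrow x i * xrow x j)"

definition h1 :: "('v::finite \<Rightarrow> 'v \<Rightarrow> bool) \<Rightarrow> ('v \<Rightarrow> 'v \<Rightarrow> real) \<Rightarrow> ('v set \<Rightarrow> real)
    \<Rightarrow> ('v \<Rightarrow> 'v \<Rightarrow> real) \<Rightarrow> real" where
  "h1 adj a p v0 = (\<Sum>(i,j) \<in> {(i,j). a i j * pp adj p i j > 0}. v0 i j) / Tot v0"

definition Delta :: "('v::finite \<Rightarrow> 'v \<Rightarrow> bool) \<Rightarrow> ('v \<Rightarrow> 'v \<Rightarrow> real) \<Rightarrow> ('v set \<Rightarrow> real)
    \<Rightarrow> ('v \<Rightarrow> 'v \<Rightarrow> real) \<Rightarrow> ('v \<Rightarrow> 'v \<Rightarrow> real) set" where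
  "Delta adj a p v0 = {x. (\<forall>i j. x i j = x j i \<and> x i j \<ge> 0 \<and> (\<not> adj i j \<longrightarrow> x i j = 0))
      \<and> (\<Sum>i\<in>UNIV. \<Sum>j\<in>UNIV. x i j) = 1
      \<and> (\<Sum>(i,j) \<in> {(i,j). a i j * pp adj p i j > 0}. x i j) \<ge> h1 adj a p v0}"

definition Uset :: "('v::finite \<Rightarrow> 'v \<Rightarrow> bool) \<Rightarrow> ('v \<Rightarrow> 'v \<Rightarrow> real) \<Rightarrow> ('v set \<Rightarrow> real)
    \<Rightarrow> ('v \<Rightarrow> 'v \<Rightarrow> real) \<Rightarrow> 'v \<Rightarrow> 'v \<Rightarrow> real \<Rightarrow> ('v \<Rightarrow> 'v \<Rightarrow> real) set" where
  "Uset adj a p v0 i j eps = {x \<in> Delta adj a p v0. x i j < eps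
      \<or> yfun adj a p x i j - Hfun adj a p x \<ge> - eps}"

text \<open>A realization of the process with positive probability at every step:
every vertex k (having a neighbour) chooses a neighbour c k, Nature picks W with p W > 0,
and exactly the edges {k,l} with k,l in W, k ~ l and mutual choice get reinforced by a k l.\<close>
definition rl_path :: "('v::finite \<Rightarrow> 'v \<Rightarrow> bool) \<Rightarrow> ('v \<Rightarrow> 'v \<Rightarrow> real) \<Rightarrow> ('v set \<Rightarrow> real)
    \<Rightarrow> ('v \<Rightarrow> 'v \<Rightarrow> real) \<Rightarrow> (nat \<Rightarrow> 'v \<Rightarrow> 'v \<Rightarrow> real) \<Rightarrow> bool" where
  "rl_path adj a p v0 V \<longleftrightarrow> V 0 = v0 \<and>
     (\<forall>n. \<exists>c W. (\<forall>k. (\<exists>l. adj k l) \<longrightarrow> adj k (c k)) \<and> p W > 0 \<and>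
        (\<forall>k l. V (Suc n) k l = V n k l +
           (if k \<in> W \<and> l \<in> W \<and> adj k l \<and> c k = l \<and> c l = k then a k l else 0)))"

end

theory Submission
  imports Defs
begin

text \<open>One step changes every weight by at most \<open>a\<^sub>k\<^sub>l \<le> A = \<Sum>a\<^sub>k\<^sub>l\<close>, so once
  \<open>T\<^sub>n\<close> is large the normalised configuration barely moves: \<open>x\<^sub>i\<^sub>j\<close> grows by at most
  \<open>A/T\<^sub>n\<close>, and while \<open>x\<^sub>i\<^sub>j \<ge> \<epsilon>\<close> the quantity \<open>y\<^sub>i\<^sub>j = a\<^sub>i\<^sub>j p\<^sub>i\<^sub>j T\<^sub>n V\<^sub>i\<^sub>j/(V\<^sub>i V\<^sub>j)\<close>
  drops by at most \<open>2A\<^sup>2/(\<epsilon>\<^sup>2 T\<^sub>n)\<close>. Hence for \<open>T\<^sub>n \<ge> C = 1 + A/\<epsilon> + 4A\<^sup>2/\<epsilon>\<^sup>3\<close>,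
  \<open>x\<^sub>i\<^sub>j \<ge> 2\<epsilon>\<close> at time \<open>n+1\<close> forces \<open>x\<^sub>i\<^sub>j \<ge> \<epsilon>\<close> at time \<open>n\<close>, so \<open>y\<^sub>i\<^sub>j - H \<ge> -\<epsilon>\<close> there,
  and the two perturbations of size \<open>\<epsilon>/2\<close> give \<open>y\<^sub>i\<^sub>j - H \<ge> -2\<epsilon>\<close> at time \<open>n+1\<close>.
  Membership in \<open>\<Delta>\<close> persists because only edges with \<open>a\<^sub>k\<^sub>l p\<^sub>k\<^sub>l > 0\<close> are reinforced,
  which can only raise their total share.\<close>

lemma pp_nonneg: "(\<forall>W. 0 \<le> p W) \<Longrightarrow> 0 \<le> pp adj p k l"
  by (simp add: pp_def sum_nonneg)

lemma pp_le_one: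
  fixes p :: "'v::finite set \<Rightarrow> real"
  assumes "\<forall>W. 0 \<le> p W" and "(\<Sum>W\<in>UNIV. p W) = 1"
  shows "pp adj p k l \<le> 1"
proof -
  have "(\<Sum>W \<in> {W. k \<in> W \<and> l \<in> W}. p W) \<le> (\<Sum>W\<in>UNIV. p W)"
    by (rule sum_mono2) (auto simp: assms(1))
  then show ?thesis using assms(2) by (simp add: pp_def)
qed

lemma pp_pos:
  fixes p :: "'v::finite set \<Rightarrow> real"
  assumes "\<forall>W. 0 \<le> p W" and "0 < p W" and "k \<in> W" "l \<in> W" "adj k l"
  shows "0 < pp adj p k l"
proof -
  have "p W \<le> (\<Sum>W \<in> {W. k \<in> W \<and> l \<in> W}. p W)"
    by (rule member_le_sum) (use assms in auto)
  then show ?thesis using assms by (simp add: pp_def)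
qed

lemma Tot_add: "Tot (\<lambda>k l. V k l + d k l) = Tot V + Tot d"
  by (simp add: Tot_def sum.distrib)

lemma Tot_nonneg: "(\<And>k l. 0 \<le> f k l) \<Longrightarrow> 0 \<le> Tot f"
  by (simp add: Tot_def sum_nonneg)

lemma row_le_Tot:
  fixes f :: "'v::finite \<Rightarrow> 'v \<Rightarrow> real"
  assumes "\<And>k l. 0 \<le> f k l"
  shows "(\<Sum>l\<in>UNIV. f k l) \<le> Tot f"
  unfolding Tot_def by (rule member_le_sum) (auto intro: sum_nonneg assms)

lemma entry_le_Tot:
  fixes f :: "'v::finite \<Rightarrow> 'v \<Rightarrow> real"
  assumes "\<And>k l. 0 \<le> f k l"
  shows "f k l \<le> Tot f"
  using member_le_sum[of l UNIV "f k"] row_le_Tot[of f k] assms by fastforce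

lemma xrow_xnorm: "xrow (xnorm V) k = (\<Sum>l\<in>UNIV. V k l) / Tot V"
  by (simp add: xrow_def xnorm_def sum_divide_distrib)

lemma Tot_xnorm: "Tot V \<noteq> 0 \<Longrightarrow> Tot (xnorm V) = 1"
  by (simp add: Tot_def xnorm_def flip: sum_divide_distrib)

lemma Delta_xnormD:
  assumes "xnorm V \<in> Delta adj a p v0" and "0 < Tot V"
  shows "V k l = V l k" and "0 \<le> V k l" and "\<not> adj k l \<Longrightarrow> V k l = 0"
  using assms by (auto simp: Delta_def xnorm_def zero_le_divide_iff)

definition reinforcement_step :: "('v \<Rightarrow> 'v \<Rightarrow> bool) \<Rightarrow> ('v \<Rightarrow> 'v \<Rightarrow> real) \<Rightarrow> ('v set \<Rightarrow> real)
    \<Rightarrow> ('v \<Rightarrow> 'v \<Rightarrow> real) \<Rightarrow> bool" where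
  "reinforcement_step adj a p d \<longleftrightarrow>
     (\<forall>k l. d k l = d l k \<and> 0 \<le> d k l \<and> d k l \<le> a k l \<and> (0 < d k l \<longrightarrow> 0 < a k l * pp adj p k l))"

lemma rl_path_Suc:
  fixes adj :: "'v::finite \<Rightarrow> 'v \<Rightarrow> bool"
  assumes "rl_path adj a p v0 V" and "\<forall>W. 0 \<le> p W"
    and "\<And>k l. adj k l \<longleftrightarrow> adj l k" and "\<And>k l. a k l = a l k" and "\<And>k l. 0 \<le> a k l"
  obtains d where "reinforcement_step adj a p d" and "V (Suc n) = (\<lambda>k l. V n k l + d k l)"
proof -
  obtain c W where "0 < p W" and step: "\<forall>k l. V (Suc n) k l = V n k l +
      (if k \<in> W \<and> l \<in> W \<and> adj k l \<and> c k = l \<and> c l = k then a k l else 0)"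
    using assms(1) unfolding rl_path_def by blast
  define d where "d k l = (if k \<in> W \<and> l \<in> W \<and> adj k l \<and> c k = l \<and> c l = k then a k l else 0)" for k l
  have "reinforcement_step adj a p d"
    unfolding reinforcement_step_def d_def
    using assms(3-5) pp_pos[OF assms(2) \<open>0 < p W\<close>] by auto
  moreover have "V (Suc n) = (\<lambda>k l. V n k l + d k l)"
    using step by (auto simp: d_def)
  ultimately show ?thesis by (rule that)
qed

lemma divide_le_add_divide_add:
  fixes s t D :: real
  assumes "s \<le> t" and "0 < t" and "0 \<le> D"
  shows "s / t \<le> (s + D) / (t + D)"
  using assms by (simp add: divide_simps) (simp add: algebra_simps mult_left_mono)

lemma xnorm_add_mem_Delta:
  fixes adj :: "'v::finite \<Rightarrow> 'v \<Rightarrow> bool"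
  assumes x: "xnorm V \<in> Delta adj a p v0" and T: "0 < Tot V"
    and d: "reinforcement_step adj a p d"
  shows "xnorm (\<lambda>k l. V k l + d k l) \<in> Delta adj a p v0"
proof -
  define S where "S = {(k, l). 0 < a k l * pp adj p k l}"
  have d_nonneg: "0 \<le> d k l" and d_sym: "d k l = d l k" and d_S: "0 < d k l \<Longrightarrow> (k, l) \<in> S" for k l
    using d by (auto simp: reinforcement_step_def S_def)
  have d_adj: "\<not> adj k l \<Longrightarrow> d k l = 0" for k l
    using d_S[of k l] d_nonneg[of k l] by (force simp: S_def pp_def)
  have T': "Tot (\<lambda>k l. V k l + d k l) = Tot V + Tot d" by (rule Tot_add)
  have D: "0 \<le> Tot d" using d_nonneg by (rule Tot_nonneg)
  have sum_pairs: "(\<Sum>(k, l)\<in>UNIV. f k l) = Tot f" for f :: "'v \<Rightarrow> 'v \<Rightarrow> real"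
    by (simp add: Tot_def sum.cartesian_product flip: UNIV_Times_UNIV)
  have S_d: "(\<Sum>(k, l)\<in>S. d k l) = Tot d"
    unfolding sum_pairs[symmetric] using d_nonneg d_S
    by (intro sum.mono_neutral_left) (auto simp: less_le)
  have S_V: "(\<Sum>(k, l)\<in>S. V k l) \<le> Tot V"
    unfolding sum_pairs[symmetric] using Delta_xnormD(2)[OF x T]
    by (intro sum_mono2) auto
  have "h1 adj a p v0 \<le> (\<Sum>(k, l)\<in>S. V k l) / Tot V"
    using x by (simp add: Delta_def S_def xnorm_def case_prod_beta sum_divide_distrib)
  also have "\<dots> \<le> ((\<Sum>(k, l)\<in>S. V k l) + Tot d) / (Tot V + Tot d)"
    using S_V T D by (rule divide_le_add_divide_add)
  also have "\<dots> = (\<Sum>(k, l)\<in>S. xnorm (\<lambda>k l. V k l + d k l) k l)"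
    using S_d by (simp add: xnorm_def T' case_prod_unfold sum.distrib flip: sum_divide_distrib)
  finally have "h1 adj a p v0 \<le> (\<Sum>(k, l)\<in>S. xnorm (\<lambda>k l. V k l + d k l) k l)" .
  moreover have "Tot (xnorm (\<lambda>k l. V k l + d k l)) = 1"
    using T D by (simp add: Tot_xnorm T')
  moreover have "xnorm (\<lambda>k l. V k l + d k l) k l = xnorm (\<lambda>k l. V k l + d k l) l k \<and>
      0 \<le> xnorm (\<lambda>k l. V k l + d k l) k l \<and> (\<not> adj k l \<longrightarrow> xnorm (\<lambda>k l. V k l + d k l) k l = 0)" for k l
    using Delta_xnormD[OF x T, of k l] Delta_xnormD[OF x T, of l k] d_nonneg[of k l] d_sym[of k l] d_adj[of k l] T D
    by (simp add: xnorm_def T')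
  ultimately show ?thesis
    unfolding Delta_def S_def by (simp add: Tot_def)
qed

lemma xnorm_add_le:
  assumes T: "0 < Tot V" and V: "\<And>k l. 0 \<le> V k l" and d: "\<And>k l. 0 \<le> d k l" and "d i j \<le> b"
  shows "xnorm (\<lambda>k l. V k l + d k l) i j \<le> xnorm V i j + b / Tot V"
proof -
  have T': "Tot V \<le> Tot (\<lambda>k l. V k l + d k l)"
    using Tot_nonneg[of d] d by (simp add: Tot_add)
  have "xnorm (\<lambda>k l. V k l + d k l) i j \<le> (V i j + b) / Tot (\<lambda>k l. V k l + d k l)"
    unfolding xnorm_def using T T' \<open>d i j \<le> b\<close> by (simp add: divide_right_mono)
  also have "\<dots> \<le> (V i j + b) / Tot V"
    using T T' V[of i j] d[of i j] \<open>d i j \<le> b\<close> by (intro divide_left_mono) auto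
  finally show ?thesis by (simp add: xnorm_def add_divide_distrib)
qed

lemma ratio_perturbation_bound:
  fixes c A e T v u w :: real
  assumes "0 \<le> c" "c \<le> A" "0 < e" "0 < T" "e * T \<le> v" "v \<le> u" "v \<le> w" "4 * A^2 / e^3 \<le> T"
  shows "c * T * v / (u * w) - c * T * v / ((u + A) * (w + A)) \<le> e / 2"
proof -
  have "0 < v" using assms(5) mult_pos_pos[OF assms(3,4)] by linarith
  then have pos: "0 < u" "0 < w" "0 < u + A" "0 < w + A" using assms by auto
  have split: "c * T * v / (u * w) - c * T * v / ((u + A) * (w + A))
      = c * T * A * (v / (u * w * (u + A)) + v / (w * (u + A) * (w + A)))"
    using pos by (simp add: divide_simps) (simp add: algebra_simps)
  have "v / (u * w * (u + A)) \<le> 1 / (u * u)"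
    using pos assms \<open>0 < v\<close> by (simp add: divide_simps) (intro mult_mono; simp)
  also have "\<dots> \<le> 1 / (e * T)^2"
    using pos assms by (simp add: power2_eq_square frac_le mult_mono)
  finally have b1: "v / (u * w * (u + A)) \<le> 1 / (e * T)^2" .
  have "v / (w * (u + A) * (w + A)) \<le> 1 / (w * w)"
    using pos assms \<open>0 < v\<close> by (simp add: divide_simps) (intro mult_mono; simp)
  also have "\<dots> \<le> 1 / (e * T)^2"
    using pos assms by (simp add: power2_eq_square frac_le mult_mono)
  finally have b2: "v / (w * (u + A) * (w + A)) \<le> 1 / (e * T)^2" .
  have "c * T * A * (v / (u * w * (u + A)) + v / (w * (u + A) * (w + A))) \<le> c * T * A * (2 / (e * T)^2)"
    using b1 b2 assms by (intro mult_left_mono) auto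
  also have "\<dots> \<le> A * A * 2 / (e^2 * T)"
    using assms by (simp add: power2_eq_square divide_simps) (meson mult_left_mono order.trans)
  also have "\<dots> \<le> e / 2"
    using assms by (simp add: divide_simps power2_eq_square power3_eq_cube mult_ac)
  finally show ?thesis unfolding split .
qed

lemma yfun_xnorm:
  "Tot V \<noteq> 0 \<Longrightarrow> yfun adj a p (xnorm V) i j
     = a i j * pp adj p i j * Tot V * V i j / ((\<Sum>l\<in>UNIV. V i l) * (\<Sum>l\<in>UNIV. V j l))"
  by (simp add: yfun_def xrow_xnorm xnorm_def power2_eq_square)

lemma yfun_xnorm_add_ge:
  fixes V d :: "'v::finite \<Rightarrow> 'v \<Rightarrow> real"
  assumes e: "0 < e" and V_nonneg: "\<And>k l. 0 \<le> V k l" and V_sym: "\<And>k l. V k l = V l k"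
    and d_nonneg: "\<And>k l. 0 \<le> d k l" and d_row: "\<And>k. (\<Sum>l\<in>UNIV. d k l) \<le> A"
    and c: "0 \<le> a i j * pp adj p i j" "a i j * pp adj p i j \<le> A"
    and big: "e \<le> xnorm V i j" and T: "4 * A^2 / e^3 \<le> Tot V"
  shows "yfun adj a p (xnorm V) i j - e / 2 \<le> yfun adj a p (xnorm (\<lambda>k l. V k l + d k l)) i j"
proof -
  define c where "c = a i j * pp adj p i j"
  define row where "row f k = (\<Sum>l\<in>UNIV. f k l)" for f :: "'v \<Rightarrow> 'v \<Rightarrow> real" and k
  have "Tot V \<noteq> 0" using big e by (auto simp: xnorm_def)
  moreover have "0 \<le> 4 * A^2 / e^3" using e by simp
  ultimately have T_pos: "0 < Tot V" using T by linarith
  have v: "e * Tot V \<le> V i j" using big T_pos by (simp add: xnorm_def pos_le_divide_eq)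
  have vu: "V i j \<le> row V i" unfolding row_def by (rule member_le_sum) (auto simp: V_nonneg)
  have "V j i \<le> row V j" unfolding row_def by (rule member_le_sum) (auto simp: V_nonneg)
  then have vw: "V i j \<le> row V j" by (simp only: V_sym[of i j])
  have "0 < V i j" using v mult_pos_pos[OF e T_pos] by linarith
  then have row_pos: "0 < row V i" "0 < row V j" using vu vw by auto
  have d_row_nonneg: "0 \<le> row d k" for k unfolding row_def by (simp add: sum_nonneg d_nonneg)
  have y: "yfun adj a p (xnorm V) i j = c * Tot V * V i j / (row V i * row V j)"
    using T_pos by (simp add: yfun_xnorm c_def row_def)
  have y': "yfun adj a p (xnorm (\<lambda>k l. V k l + d k l)) i j
      = c * (Tot V + Tot d) * (V i j + d i j) / ((row V i + row d i) * (row V j + row d j))"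
    using T_pos Tot_nonneg[of d, OF d_nonneg]
    by (simp add: yfun_xnorm c_def row_def Tot_add sum.distrib)
  have "c * Tot V * V i j / ((row V i + A) * (row V j + A))
      \<le> c * (Tot V + Tot d) * (V i j + d i j) / ((row V i + row d i) * (row V j + row d j))"
  proof (rule frac_le)
    show "0 \<le> c * (Tot V + Tot d) * (V i j + d i j)"
      using c T_pos Tot_nonneg[of d, OF d_nonneg] V_nonneg[of i j] d_nonneg[of i j] by (simp add: c_def)
    show "c * Tot V * V i j \<le> c * (Tot V + Tot d) * (V i j + d i j)"
      using c T_pos Tot_nonneg[of d, OF d_nonneg] V_nonneg[of i j] d_nonneg[of i j]
      by (intro mult_mono) (auto simp: c_def)
    show "0 < (row V i + row d i) * (row V j + row d j)"
      using row_pos d_row_nonneg by (simp add: add_pos_nonneg)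
    show "(row V i + row d i) * (row V j + row d j) \<le> (row V i + A) * (row V j + A)"
      using row_pos d_row_nonneg d_row c by (intro mult_mono) (auto simp: row_def c_def add_pos_nonneg)
  qed
  moreover have "c * Tot V * V i j / (row V i * row V j) - c * Tot V * V i j / ((row V i + A) * (row V j + A))
      \<le> e / 2"
    using c e T_pos v vu vw T by (intro ratio_perturbation_bound) (auto simp: c_def)
  ultimately show ?thesis unfolding y y' by linarith
qed

lemma xnorm_add_mem_Uset:
  fixes adj :: "'v::finite \<Rightarrow> 'v \<Rightarrow> bool" and p :: "'v set \<Rightarrow> real"
  assumes a_nonneg: "\<And>k l. 0 \<le> a k l" and eps: "0 < eps"
    and p_nonneg: "\<forall>W. 0 \<le> p W" and p_sum: "(\<Sum>W\<in>UNIV. p W) = 1"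
    and d: "reinforcement_step adj a p d"
    and T_pos: "0 < Tot V" and T_lin: "Tot a \<le> eps * Tot V" and T_quad: "4 * (Tot a)^2 / eps^3 \<le> Tot V"
    and x: "xnorm V \<in> Uset adj a p v0 i j eps"
    and H: "\<bar>Hfun adj a p (xnorm (\<lambda>k l. V k l + d k l)) - Hfun adj a p (xnorm V)\<bar> < eps / 2"
  shows "xnorm (\<lambda>k l. V k l + d k l) \<in> Uset adj a p v0 i j (2 * eps)"
proof -
  let ?x' = "xnorm (\<lambda>k l. V k l + d k l)"
  have d_nonneg: "\<And>k l. 0 \<le> d k l" and d_le: "\<And>k l. d k l \<le> a k l"
    using d by (auto simp: reinforcement_step_def)
  have x_Delta: "xnorm V \<in> Delta adj a p v0" using x by (simp add: Uset_def)
  note V = Delta_xnormD[OF x_Delta T_pos]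
  have x'_Delta: "?x' \<in> Delta adj a p v0" using x_Delta T_pos d by (rule xnorm_add_mem_Delta)
  show ?thesis
  proof (cases "?x' i j < 2 * eps")
    case True
    then show ?thesis using x'_Delta by (simp add: Uset_def)
  next
    case False
    have "?x' i j \<le> xnorm V i j + Tot a / Tot V"
      using T_pos V(2) d_nonneg
      by (rule xnorm_add_le) (use d_le[of i j] entry_le_Tot[of a i j] a_nonneg in auto)
    moreover have "Tot a / Tot V \<le> eps" using T_lin T_pos by (simp add: pos_divide_le_eq mult.commute)
    ultimately have big: "eps \<le> xnorm V i j" using False by linarith
    then have "- eps \<le> yfun adj a p (xnorm V) i j - Hfun adj a p (xnorm V)"
      using x by (simp add: Uset_def)
    moreover have "yfun adj a p (xnorm V) i j - eps / 2 \<le> yfun adj a p ?x' i j"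
    proof (rule yfun_xnorm_add_ge[OF eps V(2,1) d_nonneg _ _ _ big T_quad])
      show "(\<Sum>l\<in>UNIV. d k l) \<le> Tot a" for k
        using sum_mono[of UNIV "d k" "a k"] d_le row_le_Tot[of a k] a_nonneg by force
      show "0 \<le> a i j * pp adj p i j" "a i j * pp adj p i j \<le> Tot a"
        using mult_left_le[OF pp_le_one[OF p_nonneg p_sum, of adj i j] a_nonneg[of i j]]
          pp_nonneg[OF p_nonneg, of adj i j] entry_le_Tot[of a i j] a_nonneg
        by auto
    qed
    ultimately have "- (2 * eps) \<le> yfun adj a p ?x' i j - Hfun adj a p ?x'"
      using H unfolding abs_less_iff by linarith
    then show ?thesis using x'_Delta by (simp add: Uset_def)
  qed
qed

theorem lemma7:
  fixes adj :: "'v::finite \<Rightarrow> 'v \<Rightarrow> bool" and a :: "'v \<Rightarrow> 'v \<Rightarrow> real" and eps :: real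
  assumes adj_sym: "\<And>i j. adj i j \<longleftrightarrow> adj j i"
    and adj_irrefl: "\<And>i. \<not> adj i i"
    and a_sym: "\<And>i j. a i j = a j i"
    and a_nonneg: "\<And>i j. a i j \<ge> 0"
    and a_adj: "\<And>i j. a i j > 0 \<Longrightarrow> adj i j"
    and eps_pos: "eps > 0"
  shows "\<exists>C > 0. \<forall>(p :: 'v set \<Rightarrow> real) v0 V n i j.
     (\<forall>W. p W \<ge> 0) \<longrightarrow> (\<Sum>W\<in>UNIV. p W) = 1 \<longrightarrow>
     (\<exists>k l. a k l * pp adj p k l > 0) \<longrightarrow>
     (\<forall>k l. v0 k l = v0 l k \<and> v0 k l \<ge> 0 \<and> (v0 k l > 0 \<longleftrightarrow> adj k l)) \<longrightarrow>
     rl_path adj a p v0 V \<longrightarrow>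
     adj i j \<longrightarrow> Tot (V n) \<ge> C \<longrightarrow>
     xnorm (V n) \<in> Uset adj a p v0 i j eps \<longrightarrow>
     \<bar>Hfun adj a p (xnorm (V (Suc n))) - Hfun adj a p (xnorm (V n))\<bar> < eps / 2 \<longrightarrow>
     xnorm (V (Suc n)) \<in> Uset adj a p v0 i j (2 * eps)"
proof -
  define C where "C = 1 + Tot a / eps + 4 * (Tot a)^2 / eps^3"
  have "0 \<le> Tot a" using a_nonneg by (rule Tot_nonneg)
  then have "0 \<le> Tot a / eps" "0 \<le> 4 * (Tot a)^2 / eps^3" using eps_pos by simp_all
  then have C: "0 < C" "Tot a / eps \<le> C" "4 * (Tot a)^2 / eps^3 \<le> C" by (simp_all add: C_def)
  show ?thesis
  proof (intro exI[of _ C] conjI allI impI)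
    fix p :: "'v set \<Rightarrow> real" and v0 V n i j
    assume p: "\<forall>W. p W \<ge> 0" "(\<Sum>W\<in>UNIV. p W) = 1"
      and path: "rl_path adj a p v0 V" and T: "Tot (V n) \<ge> C"
      and x: "xnorm (V n) \<in> Uset adj a p v0 i j eps"
      and H: "\<bar>Hfun adj a p (xnorm (V (Suc n))) - Hfun adj a p (xnorm (V n))\<bar> < eps / 2"
    obtain d where d: "reinforcement_step adj a p d" and V': "V (Suc n) = (\<lambda>k l. V n k l + d k l)"
      using rl_path_Suc[OF path p(1) adj_sym a_sym a_nonneg] .
    have "Tot a \<le> eps * Tot (V n)"
      using C(2) T eps_pos by (simp add: pos_divide_le_eq) (metis mult.commute mult_right_mono less_imp_le order.trans)
    with C T show "xnorm (V (Suc n)) \<in> Uset adj a p v0 i j (2 * eps)"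
      unfolding V' using H x by (intro xnorm_add_mem_Uset[OF a_nonneg eps_pos p d]) (auto simp: V')
  qed (use C in auto)
qed

end
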